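(* For all multidistributions $\mu,\nu$ on configurations, real $w\ge0$, expectation $f$ and $c\in\{\mathit{true},\mathit{false}\}$: if $\mu\Rightarrow^w\nu$ (multi-step reduction with accumulated cost $w$), then \[ \mathbb{E}_\mu(e_c(f)) \;\ge\; [c]\cdot w + \mathbb{E}_\nu(e_c(f)). \]
   Context: Let $\mathrm{Var}$ be a finite set of integer-valued variables and $\Sigma = \mathrm{Var}\to\mathbb{Z}$ the set of stores; $\sigma[x\mapsto i]$ is the store updated at $x$. Boolean expressions $\varphi$ are evaluated on stores ($\sigma\models\varphi$). A distribution expression $d$ assigns to each store $\sigma$ a probability distribution $d(\sigma)$ on $\mathbb{Z}$. Commands: $C,D ::= \mathtt{skip} \mid \mathtt{tick}(r) \mid \mathtt{halt} \mid x :\approx d \mid \mathtt{if}_{[\psi]}(\varphi)\{C\}\{D\} \mid \mathtt{while}_{[\psi]}(\varphi)\{C\} \mid C \,\square\, D \mid C \oplus_p D \mid C;D$, with $r$ a nonnegative rational, $p\in[0,1]$. Expectations are functions $f:\Sigma\to[0,\infty]$, with pointwise operations, $\mathbf{r}$ the constant $r$, $[\varphi](\sigma)\in\{0,1\}$ the indicator, $[c]=1$ if $c=\mathit{true}$ and $0$ otherwise, $0\cdot\infty=0$. Transformer $\mathsf{et}_c$: $\mathsf{et}_c[\mathtt{skip}](f)=f$; $\mathsf{et}_c[\mathtt{tick}(r)](f)=[c]\cdot\mathbf{r}+f$; $\mathsf{et}_c[\mathtt{halt}](f)=\mathbf{0}$; $\mathsf{et}_c[x:\approx d](f)=\lambda\sigma.\sum_{i}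 d(\sigma)(i)\, f(\sigma[x\mapsto i])$; $\mathsf{et}_c[\mathtt{if}_{[\psi]}(\varphi)\{C\}\{D\}](f)=[\psi\wedge\varphi]\cdot\mathsf{et}_c[C](f)+[\psi\wedge\neg\varphi]\cdot\mathsf{et}_c[D](f)$; $\mathsf{et}_c[\mathtt{while}_{[\psi]}(\varphi)\{C\}](f)=\mathrm{lfp}\,F.\ [\psi\wedge\varphi]\cdot\mathsf{et}_c[C](F)+[\psi\wedge\neg\varphi]\cdot f$ (least fixed point, pointwise order); $\mathsf{et}_c[C\,\square\,D](f)=\max(\mathsf{et}_c[C](f),\mathsf{et}_c[D](f))$; $\mathsf{et}_c[C\oplus_p D](f)=\mathbf{p}\cdot\mathsf{et}_c[C](f)+\mathbf{(1-p)}\cdot\mathsf{et}_c[D](f)$; $\mathsf{et}_c[C;D](f)=\mathsf{et}_c[C](\mathsf{et}_c[D](f))$. Configurations: $\mathrm{Conf}=(\mathrm{Cmd}\times\Sigma)\cup\Sigma\cup\{\bot\}$; an active configuration is written $\langle C,\sigma\rangle$. A multidistribution on a set $A$ is a countable multiset $\mu$ of pairs $q:a$ with $a\in A$, $0<q\le1$, and $\sum_{q:a\in\mu}q\le1$; $\mathbb{E}_\mu(g)=\sum_{q:a\in\mu}q\cdot g(a)$ (with multiplicity). For $0<p\le1$, $p\cdot\{q_i:a_i\}_i=\{p q_i:a_i\}_i$, and for a countable family with $p_i>0$, $\sum_ip_i\le1$, $\biguplus_i p_i\cdot\mu_i$ is the multiset union of the $p_i\cdot\mu_i$. For $h:A\to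 B$, $\overline h(\{q_i:a_i\}_i)=\{q_i:h(a_i)\}_i$. A configuration $\gamma$ is identified with $\{1:\gamma\}$; entries with probability $0$ are omitted. The one-step relation $\gamma\to_w\mu$ is the least relation closed under: $\langle\mathtt{skip},\sigma\rangle\to_0\sigma$; $\langle\mathtt{tick}(r),\sigma\rangle\to_r\sigma$; $\langle\mathtt{halt},\sigma\rangle\to_0\bot$; $\langle x:\approx d,\sigma\rangle\to_0\{d(\sigma)(i):\sigma[x\mapsto i]\mid d(\sigma)(i)>0\}$; $\langle\mathtt{if}_{[\psi]}(\varphi)\{C\}\{D\},\sigma\rangle\to_0\langle C,\sigma\rangle$ if $\sigma\models\psi\wedge\varphi$, $\to_0\langle D,\sigma\rangle$ if $\sigma\models\psi\wedge\neg\varphi$, $\to_0\bot$ if $\sigma\models\neg\psi$; $\langle\mathtt{while}_{[\psi]}(\varphi)\{C\},\sigma\rangle\to_0\langle C;\mathtt{while}_{[\psi]}(\varphi)\{C\},\sigma\rangle$ if $\sigma\models\psi\wedge\varphi$, $\to_0\sigma$ if $\sigma\models\psi\wedge\neg\varphi$, $\to_0\bot$ if $\sigma\models\neg\psi$; $\langle C\,\square\,D,\sigma\rangle\to_0\langle C,\sigma\rangle$ and $\to_0\langle D,\sigma\rangle$; $\langle C\oplus_pD,\sigma\rangle\to_0\{p:\langle C,\sigma\rangle,1-p:\langle D,\sigma\rangle\}$; if $\langle C,\sigma\rangle\to_r\mu$ then $\langle C;D,\sigma\rangle\to_r\overline{\kappa_D}(\mu)$, where $\kappa_D(\langle C',\sigma'\rangle)=\langle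 C';D,\sigma'\rangle$, $\kappa_D(\sigma')=\langle D,\sigma'\rangle$, $\kappa_D(\bot)=\bot$. The lifted relation $\mu\Rightarrow_w\nu$ on multidistributions is the least relation with: $\mu\Rightarrow_0\mu$; $\{1:\gamma\}\Rightarrow_w\mu$ whenever $\gamma\to_w\mu$; and if $\mu_i\Rightarrow_{w_i}\nu_i$ for all $i$ in a countable index set $I$, $p_i>0$, $\sum_ip_i\le1$, then $\biguplus_ip_i\cdot\mu_i\Rightarrow_{w}\biguplus_ip_i\cdot\nu_i$ with $w=\sum_ip_iw_i$. The multi-step relation $\Rightarrow^w$ is the least relation with: $\mu\Rightarrow^0\mu$; $\mu\Rightarrow^w\nu$ whenever $\mu\Rightarrow_w\nu$; and $\mu\Rightarrow^{w_1+w_2}\nu$ whenever $\mu\Rightarrow^{w_1}\mu'$ and $\mu'\Rightarrow^{w_2}\nu$. For an expectation $f$, $e_c(f):\mathrm{Conf}\to[0,\infty]$ is defined by $e_c(f)(\langle C,\sigma\rangle)=\mathsf{et}_c[C](f)(\sigma)$, $e_c(f)(\sigma)=f(\sigma)$, $e_c(f)(\bot)=0$. *)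

theory Defs
  imports "HOL-Analysis.Analysis" "HOL-Probability.Probability_Mass_Function"
begin

type_synonym 'v store = "'v \<Rightarrow> int"
type_synonym 'v bexp = "'v store \<Rightarrow> bool"
type_synonym 'v dexp = "'v store \<Rightarrow> int pmf"
type_synonym 'v expect = "'v store \<Rightarrow> ennreal"

typedef nnrat = "{r :: rat. 0 \<le> r}" by auto
typedef unitreal = "{p :: real. 0 \<le> p \<and> p \<le> 1}" by auto

datatype 'v cmd =
    Skip
  | Tick nnrat
  | Halt
  | Assign 'v "'v dexp"
  | If "'v bexp" "'v bexp" "'v cmd" "'v cmd"
  | While "'v bexp" "'v bexp" "'v cmd"
  | NDet "'v cmd" "'v cmd"
  | PChoice "'v cmd" unitreal "'v cmd"
  | Seq "'v cmd" "'v cmd"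

definition tickcost :: "nnrat \<Rightarrow> real" where
  "tickcost r = real_of_rat (Rep_nnrat r)"

definition prb :: "unitreal \<Rightarrow> real" where
  "prb p = Rep_unitreal p"

primrec et :: "bool \<Rightarrow> 'v cmd \<Rightarrow> 'v expect \<Rightarrow> 'v expect" where
  "et c Skip f = f"
| "et c (Tick r) f = (\<lambda>\<sigma>. of_bool c * ennreal (tickcost r) + f \<sigma>)"
| "et c Halt f = (\<lambda>\<sigma>. 0)"
| "et c (Assign x d) f = (\<lambda>\<sigma>. \<Sum>\<^sub>\<infinity> i. ennreal (pmf (d \<sigma>) i) * f (\<sigma>(x := i)))"
| "et c (If \<psi> \<phi> C D) f = (\<lambda>\<sigma>. of_bool (\<psi> \<sigma> \<and> \<phi> \<sigma>) * et c C f \<sigma>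
                                 + of_bool (\<psi> \<sigma> \<and> \<not> \<phi> \<sigma>) * et c D f \<sigma>)"
| "et c (While \<psi> \<phi> C) f = lfp (\<lambda>F \<sigma>. of_bool (\<psi> \<sigma> \<and> \<phi> \<sigma>) * et c C F \<sigma>
                                 + of_bool (\<psi> \<sigma> \<and> \<not> \<phi> \<sigma>) * f \<sigma>)"
| "et c (NDet C D) f = (\<lambda>\<sigma>. max (et c C f \<sigma>) (et c D f \<sigma>))"
| "et c (PChoice C p D) f = (\<lambda>\<sigma>. ennreal (prb p) * et c C f \<sigma> + ennreal (1 - prb p) * et c D f \<sigma>)"
| "et c (Seq C D) f = et c C (et c D f)"

datatype 'v conf = Active "'v cmd" "'v store" | Term "'v store" | Bot

fun ec :: "bool \<Rightarrow> 'v expect \<Rightarrow> 'v conf \<Rightarrow> ennreal" where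
  "ec c f (Active C \<sigma>) = et c C f \<sigma>"
| "ec c f (Term \<sigma>) = f \<sigma>"
| "ec c f Bot = 0"

text \<open>A countable multiset of pairs q:a is represented by its multiplicity function
  (each pair has finite multiplicity since q > 0 and the total mass is at most 1).\<close>

type_synonym 'a mdist = "real \<times> 'a \<Rightarrow> nat"

definition is_mdist :: "'a mdist \<Rightarrow> bool" where
  "is_mdist \<mu> \<longleftrightarrow> (\<forall>x. 0 < \<mu> x \<longrightarrow> 0 < fst x \<and> fst x \<le> 1)
                 \<and> (\<Sum>\<^sub>\<infinity> x. of_nat (\<mu> x) * ennreal (fst x)) \<le> 1"

definition Emd :: "'a mdist \<Rightarrow> ('a \<Rightarrow> ennreal) \<Rightarrow> ennreal" where
  "Emd \<mu> g = (\<Sum>\<^sub>\<infinity> x. of_nat (\<mu> x) * ennreal (fst x) * g (snd x))"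

definition dirac :: "'a \<Rightarrow> 'a mdist" where
  "dirac a = (\<lambda>(q, b). if q = 1 \<and> b = a then 1 else 0)"

definition mfam :: "'i set \<Rightarrow> ('i \<Rightarrow> real) \<Rightarrow> ('i \<Rightarrow> 'a) \<Rightarrow> 'a mdist" where
  "mfam I q a = (\<lambda>(r, b). card {i \<in> I. q i = r \<and> a i = b})"

text \<open>p \<cdot> mu, for 0 < p.\<close>
definition scale :: "real \<Rightarrow> 'a mdist \<Rightarrow> 'a mdist" where
  "scale p \<mu> = (\<lambda>(q, a). \<mu> (q / p, a))"

definition munion :: "nat set \<Rightarrow> (nat \<Rightarrow> real) \<Rightarrow> (nat \<Rightarrow> 'a mdist) \<Rightarrow> 'a mdist" where
  "munion I p \<mu> = (\<lambda>x. \<Sum>\<^sub>\<infinity> i\<in>I. scale (p i) (\<mu> i) x)"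

definition mmap :: "('a \<Rightarrow> 'b) \<Rightarrow> 'a mdist \<Rightarrow> 'b mdist" where
  "mmap h \<mu> = (\<lambda>(q, b). \<Sum>\<^sub>\<infinity> a\<in>{a. h a = b}. \<mu> (q, a))"

fun kappa :: "'v cmd \<Rightarrow> 'v conf \<Rightarrow> 'v conf" where
  "kappa D (Active C' \<sigma>') = Active (Seq C' D) \<sigma>'"
| "kappa D (Term \<sigma>') = Active D \<sigma>'"
| "kappa D Bot = Bot"

inductive step :: "'v conf \<Rightarrow> real \<Rightarrow> 'v conf mdist \<Rightarrow> bool" where
  step_skip: "step (Active Skip \<sigma>) 0 (dirac (Term \<sigma>))"
| step_tick: "step (Active (Tick r) \<sigma>) (tickcost r) (dirac (Term \<sigma>))"
| step_halt: "step (Active Halt \<sigma>) 0 (dirac Bot)"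
| step_assign: "step (Active (Assign x d) \<sigma>) 0
     (mfam {i. 0 < pmf (d \<sigma>) i} (\<lambda>i. pmf (d \<sigma>) i) (\<lambda>i. Term (\<sigma>(x := i))))"
| step_if_t: "\<psi> \<sigma> \<and> \<phi> \<sigma> \<Longrightarrow> step (Active (If \<psi> \<phi> C D) \<sigma>) 0 (dirac (Active C \<sigma>))"
| step_if_f: "\<psi> \<sigma> \<and> \<not> \<phi> \<sigma> \<Longrightarrow> step (Active (If \<psi> \<phi> C D) \<sigma>) 0 (dirac (Active D \<sigma>))"
| step_if_a: "\<not> \<psi> \<sigma> \<Longrightarrow> step (Active (If \<psi> \<phi> C D) \<sigma>) 0 (dirac Bot)"
| step_while_t: "\<psi> \<sigma> \<and> \<phi> \<sigma> \<Longrightarrow>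
     step (Active (While \<psi> \<phi> C) \<sigma>) 0 (dirac (Active (Seq C (While \<psi> \<phi> C)) \<sigma>))"
| step_while_f: "\<psi> \<sigma> \<and> \<not> \<phi> \<sigma> \<Longrightarrow> step (Active (While \<psi> \<phi> C) \<sigma>) 0 (dirac (Term \<sigma>))"
| step_while_a: "\<not> \<psi> \<sigma> \<Longrightarrow> step (Active (While \<psi> \<phi> C) \<sigma>) 0 (dirac Bot)"
| step_ndet_l: "step (Active (NDet C D) \<sigma>) 0 (dirac (Active C \<sigma>))"
| step_ndet_r: "step (Active (NDet C D) \<sigma>) 0 (dirac (Active D \<sigma>))"
| step_pchoice: "step (Active (PChoice C p D) \<sigma>) 0
     (mfam {b. 0 < (if b then prb p else 1 - prb p)}
           (\<lambda>b. if b then prb p else 1 - prb p)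
           (\<lambda>b. Active (if b then C else D) \<sigma>))"
| step_seq: "step (Active C \<sigma>) r \<mu> \<Longrightarrow> step (Active (Seq C D) \<sigma>) r (mmap (kappa D) \<mu>)"

text \<open>Lifted one-step relation on multidistributions (countable index sets taken as subsets of nat).\<close>
inductive lstep :: "'v conf mdist \<Rightarrow> real \<Rightarrow> 'v conf mdist \<Rightarrow> bool" where
  lstep_refl: "is_mdist \<mu> \<Longrightarrow> lstep \<mu> 0 \<mu>"
| lstep_step: "step \<gamma> w \<mu> \<Longrightarrow> lstep (dirac \<gamma>) w \<mu>"
| lstep_union: "\<lbrakk> \<forall>i\<in>I. lstep (\<mu> i) (ws i) (\<nu> i); \<forall>i\<in>I. 0 < p i;
                  (\<Sum>\<^sub>\<infinity> i\<in>I. ennreal (p i)) \<le> 1; ((\<lambda>i. p i * ws i) has_sum w) I \<rbrakk>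
                \<Longrightarrow> lstep (munion I p \<mu>) w (munion I p \<nu>)"

inductive mstep :: "'v conf mdist \<Rightarrow> real \<Rightarrow> 'v conf mdist \<Rightarrow> bool" where
  mstep_refl: "is_mdist \<mu> \<Longrightarrow> mstep \<mu> 0 \<mu>"
| mstep_one: "lstep \<mu> w \<nu> \<Longrightarrow> mstep \<mu> w \<nu>"
| mstep_trans: "mstep \<mu> w1 \<mu>' \<Longrightarrow> mstep \<mu>' w2 \<nu> \<Longrightarrow> mstep \<mu> (w1 + w2) \<nu>"

end

theory Submission
  imports Defs
begin

text \<open>The expected-cost function \<open>e\<^sub>c(f)\<close> is a potential for the operational semantics.
  For a single step \<open>\<gamma> \<rightarrow>\<^sub>r \<mu>\<close> the defining equations of \<open>et\<^sub>c\<close> give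
  \<open>[c]\<cdot>r + \<bbbE>\<^sub>\<mu>(e\<^sub>c f) \<le> e\<^sub>c f(\<gamma>)\<close> rule by rule: loops need the fixed-point unfolding
  of \<open>et\<^sub>c\<close>, and sequencing needs \<open>e\<^sub>c f \<circ> \<kappa>\<^sub>D = e\<^sub>c(et\<^sub>c[D] f)\<close>. The inequality lifts to
  weighted unions of multidistributions because the expectation is linear in them (equality on
  the source side needs that each weighted pair has only finitely many contributors, which
  follows from weights in \<open>(0,1]\<close> and total mass at most 1), and it composes along multi-step
  reductions because costs add up.\<close>

text \<open>The library's \<open>summable_on_ennreal\<close> is, through an unintended coercion, only stated
  for functions of the form \<^term>\<open>ennreal_of_enat \<circ> f\<close>.\<close>

lemma summable_on_ennreal_any [simp]: "(f :: 'a \<Rightarrow> ennreal) summable_on A"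
  by (rule nonneg_summable_on_complete) simp

lemma sum_le_infsum_ennreal:
  fixes f :: "'a \<Rightarrow> ennreal"
  assumes "finite F" "F \<subseteq> A"
  shows "sum f F \<le> infsum f A"
  unfolding nonneg_infsum_complete[OF zero_le] using assms by (auto intro: SUP_upper)

lemma infsum_cmult_right_ennreal:
  fixes f :: "'a \<Rightarrow> ennreal"
  shows "(\<Sum>\<^sub>\<infinity>x\<in>A. c * f x) = c * (\<Sum>\<^sub>\<infinity>x\<in>A. f x)"
  by (simp add: nonneg_infsum_complete SUP_mult_left_ennreal sum_distrib_left)

lemma infsum_cmult_left_ennreal:
  fixes f :: "'a \<Rightarrow> ennreal"
  shows "(\<Sum>\<^sub>\<infinity>x\<in>A. f x * c) = (\<Sum>\<^sub>\<infinity>x\<in>A. f x) * c"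
  using infsum_cmult_right_ennreal[of c f A] by (simp add: mult.commute)

lemma infsum_sum_swap_ennreal:
  fixes f :: "'a \<Rightarrow> 'b \<Rightarrow> ennreal"
  assumes "finite F"
  shows "(\<Sum>\<^sub>\<infinity>y\<in>B. \<Sum>x\<in>F. f x y) = (\<Sum>x\<in>F. \<Sum>\<^sub>\<infinity>y\<in>B. f x y)"
  using assms by induction (simp_all add: infsum_add)

lemma infsum_swap_ennreal:
  fixes f :: "'a \<Rightarrow> 'b \<Rightarrow> ennreal"
  shows "(\<Sum>\<^sub>\<infinity>x\<in>A. \<Sum>\<^sub>\<infinity>y\<in>B. f x y) = (\<Sum>\<^sub>\<infinity>y\<in>B. \<Sum>\<^sub>\<infinity>x\<in>A. f x y)"
proof -
  have le: "(\<Sum>\<^sub>\<infinity>x\<in>A. \<Sum>\<^sub>\<infinity>y\<in>B. f x y) \<le> (\<Sum>\<^sub>\<infinity>y\<in>B. \<Sum>\<^sub>\<infinity>x\<in>A. f x y)"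
    for A :: "'c set" and B :: "'d set" and f :: "'c \<Rightarrow> 'd \<Rightarrow> ennreal"
  proof (rule infsum_le_finite_sums)
    fix F assume F: "finite F" "F \<subseteq> A"
    have "(\<Sum>x\<in>F. \<Sum>\<^sub>\<infinity>y\<in>B. f x y) = (\<Sum>\<^sub>\<infinity>y\<in>B. \<Sum>x\<in>F. f x y)"
      by (rule infsum_sum_swap_ennreal[OF F(1), symmetric])
    also have "\<dots> \<le> (\<Sum>\<^sub>\<infinity>y\<in>B. \<Sum>\<^sub>\<infinity>x\<in>A. f x y)"
      using F by (intro infsum_mono sum_le_infsum_ennreal) auto
    finally show "(\<Sum>x\<in>F. \<Sum>\<^sub>\<infinity>y\<in>B. f x y) \<le> \<dots>" .
  qed simp
  show ?thesis by (intro antisym le)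
qed

lemma infsum_fiberwise_ennreal:
  fixes m :: "'b \<Rightarrow> ennreal" and K :: "'a \<Rightarrow> ennreal"
  shows "(\<Sum>\<^sub>\<infinity>x. (\<Sum>\<^sub>\<infinity>y\<in>A. if k y = x then m y else 0) * K x) = (\<Sum>\<^sub>\<infinity>y\<in>A. m y * K (k y))"
proof -
  have "(\<Sum>\<^sub>\<infinity>x. (\<Sum>\<^sub>\<infinity>y\<in>A. if k y = x then m y else 0) * K x)
      = (\<Sum>\<^sub>\<infinity>x. \<Sum>\<^sub>\<infinity>y\<in>A. if k y = x then m y * K x else 0)"
    by (auto simp: infsum_cmult_left_ennreal[symmetric] intro!: infsum_cong)
  also have "\<dots> = (\<Sum>\<^sub>\<infinity>y\<in>A. \<Sum>\<^sub>\<infinity>x. if k y = x then m y * K x else 0)"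
    by (rule infsum_swap_ennreal)
  also have "\<dots> = (\<Sum>\<^sub>\<infinity>y\<in>A. m y * K (k y))"
  proof (rule infsum_cong)
    fix y
    have "(\<Sum>\<^sub>\<infinity>x. if k y = x then m y * K x else 0) = (\<Sum>\<^sub>\<infinity>x\<in>{k y}. m y * K x)"
      by (rule infsum_cong_neutral) auto
    then show "(\<Sum>\<^sub>\<infinity>x. if k y = x then m y * K x else 0) = m y * K (k y)" by simp
  qed
  finally show ?thesis .
qed

lemma of_nat_infsum_ennreal:
  fixes f :: "'a \<Rightarrow> nat"
  assumes "f summable_on A"
  shows "(of_nat (infsum f A) :: ennreal) = (\<Sum>\<^sub>\<infinity>x\<in>A. of_nat (f x))"
proof -
  have "((\<lambda>x. of_nat (f x) :: ennreal) has_sum of_nat (infsum f A)) A"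
    using assms by (intro has_sum_of_nat has_sum_infsum)
  then show ?thesis by (simp add: infsumI)
qed

lemma of_nat_infsum_le_ennreal:
  fixes f :: "'a \<Rightarrow> nat"
  shows "(of_nat (infsum f A) :: ennreal) \<le> (\<Sum>\<^sub>\<infinity>x\<in>A. of_nat (f x))"
  by (cases "f summable_on A") (simp_all add: of_nat_infsum_ennreal infsum_not_exists)

lemma infsum_ennreal_of_has_sum:
  fixes u :: "'a \<Rightarrow> real"
  assumes "(u has_sum w) I" "\<And>i. i \<in> I \<Longrightarrow> 0 \<le> u i"
  shows "(\<Sum>\<^sub>\<infinity>i\<in>I. ennreal (u i)) = ennreal w"
proof -
  have "((ennreal \<circ> u) has_sum ennreal w) I"
  proof (rule has_sum_comm_additive_general[OF _ _ assms(1)])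
    show "sum (ennreal \<circ> u) F = ennreal (sum u F)" if "finite F" "F \<subseteq> I" for F
      using that assms(2) by (subst sum_ennreal[symmetric]) auto
  qed (intro tendsto_ennrealI tendsto_ident_at)
  then show ?thesis by (simp add: infsumI o_def)
qed

lemma of_nat_card_le_infsum_ennreal:
  "(of_nat (card {i\<in>I. P i}) :: ennreal) \<le> (\<Sum>\<^sub>\<infinity>i\<in>I. if P i then 1 else 0)"
proof (cases "finite {i\<in>I. P i}")
  case True
  have "(\<Sum>\<^sub>\<infinity>i\<in>I. if P i then 1 else 0) = (\<Sum>\<^sub>\<infinity>i\<in>{i\<in>I. P i}. (1::ennreal))"
    by (rule infsum_cong_neutral) auto
  then show ?thesis using True by simp
qed simp

lemma Emd_eq: "Emd \<mu> g = (\<Sum>\<^sub>\<infinity>x. of_nat (\<mu> x) * (ennreal (fst x) * g (snd x)))"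
  unfolding Emd_def by (simp add: mult.assoc)

lemma Emd_dirac: "Emd (dirac a) g = g a"
proof -
  have "Emd (dirac a) g = (\<Sum>\<^sub>\<infinity>x\<in>{(1, a)}. of_nat (dirac a x) * ennreal (fst x) * g (snd x))"
    unfolding Emd_def by (rule infsum_cong_neutral) (auto simp: dirac_def split: if_splits)
  then show ?thesis by (simp add: dirac_def)
qed

text \<open>The multiplicities in \<^const>\<open>mfam\<close>, \<^const>\<open>mmap\<close> and \<^const>\<open>munion\<close> are cardinalities
  or infinite sums of naturals, which are junk (0) when infinitely many indices produce the
  same pair. Hence in general only upper bounds on \<^const>\<open>Emd\<close> hold; \<open>Emd_munion_eq\<close> recovers
  equality when no pair has infinitely many contributors.\<close>

lemma Emd_mfam_le: "Emd (mfam I q a) g \<le> (\<Sum>\<^sub>\<infinity>i\<in>I. ennreal (q i) * g (a i))"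
proof -
  define k where "k i = (q i, a i)" for i
  have "Emd (mfam I q a) g
      = (\<Sum>\<^sub>\<infinity>x. of_nat (card {i\<in>I. k i = x}) * (ennreal (fst x) * g (snd x)))"
    unfolding Emd_eq mfam_def k_def by (rule infsum_cong) (auto split: prod.splits)
  also have "\<dots> \<le> (\<Sum>\<^sub>\<infinity>x. (\<Sum>\<^sub>\<infinity>i\<in>I. if k i = x then 1 else 0) * (ennreal (fst x) * g (snd x)))"
    by (intro infsum_mono mult_right_mono of_nat_card_le_infsum_ennreal) auto
  also have "\<dots> = (\<Sum>\<^sub>\<infinity>i\<in>I. 1 * (ennreal (fst (k i)) * g (snd (k i))))"
    by (rule infsum_fiberwise_ennreal)
  finally show ?thesis by (simp add: k_def)
qed

lemma Emd_mmap_le: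
  fixes h :: "'a \<Rightarrow> 'b" and \<mu> :: "'a mdist"
  shows "Emd (mmap h \<mu>) g \<le> Emd \<mu> (g \<circ> h)"
proof -
  define k where "k y = (fst y, h (snd y))" for y :: "real \<times> 'a"
  have fiber: "(\<Sum>\<^sub>\<infinity>a\<in>{a. h a = snd x}. (of_nat (\<mu> (fst x, a)) :: ennreal))
      = (\<Sum>\<^sub>\<infinity>y. if k y = x then of_nat (\<mu> y) else 0)" for x
  proof -
    have "bij_betw (\<lambda>a. (fst x, a)) {a. h a = snd x} {y. k y = x}"
      by (rule bij_betwI[where g=snd]) (auto simp: k_def)
    then have "(\<Sum>\<^sub>\<infinity>a\<in>{a. h a = snd x}. (of_nat (\<mu> (fst x, a)) :: ennreal))
        = (\<Sum>\<^sub>\<infinity>y\<in>{y. k y = x}. of_nat (\<mu> y))"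
      by (rule infsum_reindex_bij_betw)
    also have "\<dots> = (\<Sum>\<^sub>\<infinity>y. if k y = x then of_nat (\<mu> y) else 0)"
      by (rule infsum_cong_neutral) auto
    finally show ?thesis .
  qed
  have "Emd (mmap h \<mu>) g = (\<Sum>\<^sub>\<infinity>x. of_nat (\<Sum>\<^sub>\<infinity>a\<in>{a. h a = snd x}. \<mu> (fst x, a))
                                  * (ennreal (fst x) * g (snd x)))"
    unfolding Emd_eq mmap_def by (rule infsum_cong) (auto split: prod.splits)
  also have "\<dots> \<le> (\<Sum>\<^sub>\<infinity>x. (\<Sum>\<^sub>\<infinity>y. if k y = x then of_nat (\<mu> y) else 0) * (ennreal (fst x) * g (snd x)))"
    by (intro infsum_mono mult_right_mono) (auto simp: fiber[symmetric] of_nat_infsum_le_ennreal)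
  also have "\<dots> = (\<Sum>\<^sub>\<infinity>y. of_nat (\<mu> y) * (ennreal (fst (k y)) * g (snd (k y))))"
    by (rule infsum_fiberwise_ennreal)
  finally show ?thesis by (simp add: k_def Emd_eq)
qed

lemma Emd_scale:
  assumes "0 < p"
  shows "Emd (scale p \<mu>) g = ennreal p * Emd \<mu> g"
proof -
  define \<phi> where "\<phi> y = (p * fst y, snd y)" for y :: "real \<times> 'a"
  have bij: "bij_betw \<phi> UNIV UNIV"
    by (rule bij_betwI[where g="\<lambda>x. (fst x / p, snd x)"]) (use assms in \<open>auto simp: \<phi>_def\<close>)
  have "Emd (scale p \<mu>) g = (\<Sum>\<^sub>\<infinity>x. of_nat (\<mu> (fst x / p, snd x)) * ennreal (fst x) * g (snd x))"
    unfolding Emd_def scale_def by (rule infsum_cong) (auto split: prod.splits)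
  also have "\<dots> = (\<Sum>\<^sub>\<infinity>y. of_nat (\<mu> (fst (\<phi> y) / p, snd (\<phi> y))) * ennreal (fst (\<phi> y)) * g (snd (\<phi> y)))"
    by (rule infsum_reindex_bij_betw[OF bij, symmetric])
  also have "\<dots> = (\<Sum>\<^sub>\<infinity>y. ennreal p * (of_nat (\<mu> y) * ennreal (fst y) * g (snd y)))"
    using assms by (intro infsum_cong) (simp add: \<phi>_def ennreal_mult' mult_ac)
  also have "\<dots> = ennreal p * Emd \<mu> g"
    unfolding Emd_def by (rule infsum_cmult_right_ennreal)
  finally show ?thesis .
qed

lemma infsum_scale_Emd:
  assumes "\<forall>i\<in>I. 0 < p i"
  shows "(\<Sum>\<^sub>\<infinity>x. (\<Sum>\<^sub>\<infinity>i\<in>I. of_nat (scale (p i) (\<nu> i) x)) * (ennreal (fst x) * g (snd x)))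
       = (\<Sum>\<^sub>\<infinity>i\<in>I. ennreal (p i) * Emd (\<nu> i) g)"
proof -
  have "(\<Sum>\<^sub>\<infinity>x. (\<Sum>\<^sub>\<infinity>i\<in>I. of_nat (scale (p i) (\<nu> i) x)) * (ennreal (fst x) * g (snd x)))
      = (\<Sum>\<^sub>\<infinity>i\<in>I. \<Sum>\<^sub>\<infinity>x. of_nat (scale (p i) (\<nu> i) x) * (ennreal (fst x) * g (snd x)))"
    by (simp add: infsum_cmult_left_ennreal[symmetric] infsum_swap_ennreal[of _ UNIV])
  also have "\<dots> = (\<Sum>\<^sub>\<infinity>i\<in>I. ennreal (p i) * Emd (\<nu> i) g)"
    using assms by (intro infsum_cong) (simp add: Emd_eq[symmetric] Emd_scale)
  finally show ?thesis .
qed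

lemma Emd_munion_le:
  assumes "\<forall>i\<in>I. 0 < p i"
  shows "Emd (munion I p \<nu>) g \<le> (\<Sum>\<^sub>\<infinity>i\<in>I. ennreal (p i) * Emd (\<nu> i) g)"
  unfolding infsum_scale_Emd[OF assms, symmetric] unfolding Emd_eq munion_def
  by (intro infsum_mono mult_right_mono of_nat_infsum_le_ennreal) auto

lemma Emd_munion_eq:
  assumes "\<forall>i\<in>I. 0 < p i" and "\<And>x. finite {i\<in>I. scale (p i) (\<mu> i) x \<noteq> 0}"
  shows "Emd (munion I p \<mu>) g = (\<Sum>\<^sub>\<infinity>i\<in>I. ennreal (p i) * Emd (\<mu> i) g)"
proof -
  have "((\<lambda>i. scale (p i) (\<mu> i) x)
          has_sum (\<Sum>i\<in>{i\<in>I. scale (p i) (\<mu> i) x \<noteq> 0}. scale (p i) (\<mu> i) x)) I" for x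
    by (rule has_sum_finite_neutralI[OF assms(2)]) auto
  then have "(\<lambda>i. scale (p i) (\<mu> i) x) summable_on I" for x
    unfolding summable_on_def by blast
  then show ?thesis
    unfolding infsum_scale_Emd[OF assms(1), symmetric] unfolding Emd_eq munion_def
    by (simp add: of_nat_infsum_ennreal)
qed

definition weights_in_unit :: "'a mdist \<Rightarrow> bool" where
  "weights_in_unit \<mu> \<longleftrightarrow> (\<forall>x. 0 < \<mu> x \<longrightarrow> 0 < fst x \<and> fst x \<le> 1)"

lemma weights_in_unit_dirac: "weights_in_unit (dirac a)"
  by (auto simp: weights_in_unit_def dirac_def split: if_splits)

lemma scale_nonzero_weight:
  assumes "weights_in_unit \<mu>" "0 < p" "scale p \<mu> x \<noteq> 0"
  shows "0 < fst x \<and> fst x \<le> p"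
proof -
  obtain q a where x: "x = (q, a)" by (cases x)
  have "0 < \<mu> (q / p, a)" using assms(3) by (simp add: scale_def x)
  then have "0 < q / p \<and> q / p \<le> 1" using assms(1) unfolding weights_in_unit_def by fastforce
  then show ?thesis using assms(2) by (simp add: x zero_less_divide_iff divide_le_eq)
qed

text \<open>A pair of weight \<open>q > 0\<close> can only come from components with \<open>p i \<ge> q\<close>, and the
  \<open>p i\<close> have total mass at most 1.\<close>

lemma finite_munion_contributors:
  assumes "\<forall>i\<in>I. weights_in_unit (\<mu> i)" "\<forall>i\<in>I. 0 < p i" "(\<Sum>\<^sub>\<infinity>i\<in>I. ennreal (p i)) \<le> 1"
  shows "finite {i\<in>I. scale (p i) (\<mu> i) x \<noteq> 0}"
proof (rule ccontr)
  define S where "S = {i\<in>I. scale (p i) (\<mu> i) x \<noteq> 0}"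
  assume inf: "infinite S"
  then obtain j where "j \<in> S" by (metis ex_in_conv finite.emptyI)
  then have "0 < fst x" using scale_nonzero_weight assms unfolding S_def by blast
  have "ennreal (fst x) \<le> ennreal (p i)" if "i \<in> S" for i
    using scale_nonzero_weight[of "\<mu> i" "p i" x] that assms unfolding S_def by (auto intro: ennreal_leI)
  then have "(\<Sum>\<^sub>\<infinity>i\<in>S. ennreal (p i)) = \<infinity>"
    by (rule infsum_superconst_infinite_ennreal) (use \<open>0 < fst x\<close> inf in simp_all)
  moreover have "(\<Sum>\<^sub>\<infinity>i\<in>S. ennreal (p i)) \<le> (\<Sum>\<^sub>\<infinity>i\<in>I. ennreal (p i))"
    by (rule infsum_mono_neutral) (auto simp: S_def)
  ultimately show False using assms(3) by (simp add: top_unique)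
qed

lemma weights_in_unit_munion:
  assumes "\<forall>i\<in>I. weights_in_unit (\<mu> i)" "\<forall>i\<in>I. 0 < p i" "(\<Sum>\<^sub>\<infinity>i\<in>I. ennreal (p i)) \<le> 1"
  shows "weights_in_unit (munion I p \<mu>)"
  unfolding weights_in_unit_def
proof (intro allI impI)
  fix x assume "0 < munion I p \<mu> x"
  then obtain i where i: "i \<in> I" "scale (p i) (\<mu> i) x \<noteq> 0"
    unfolding munion_def by (metis (mono_tags, lifting) infsum_0 less_irrefl)
  have "ennreal (p i) \<le> (\<Sum>\<^sub>\<infinity>i\<in>I. ennreal (p i))"
    using sum_le_infsum_ennreal[of "{i}" I "\<lambda>i. ennreal (p i)"] i(1) by simp
  then have "p i \<le> 1" using assms(3) by (metis ennreal_le_1 order_trans)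
  then show "0 < fst x \<and> fst x \<le> 1" using scale_nonzero_weight[of "\<mu> i" "p i" x] i assms by force
qed

lemma et_mono: "f \<le> g \<Longrightarrow> et c C f \<le> et c C g"
proof (induction C arbitrary: f g)
  case (Tick r)
  then show ?case by (auto simp: le_fun_def intro: add_left_mono)
next
  case (Assign x d)
  then show ?case by (auto simp: le_fun_def intro!: infsum_mono mult_left_mono)
next
  case (If \<psi> \<phi> C D)
  then show ?case by (auto simp: le_fun_def intro!: add_mono mult_left_mono)
next
  case (While \<psi> \<phi> C)
  then show ?case
    unfolding et.simps by (intro lfp_mono) (auto simp: le_fun_def intro!: add_mono mult_left_mono)
next
  case (NDet C D)
  then have "et c C f \<le> et c C g" "et c D f \<le> et c D g" by blast+
  then show ?case unfolding le_fun_def et.simps by (intro allI max.mono) auto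
next
  case (PChoice C p D)
  then show ?case by (auto simp: le_fun_def intro!: add_mono mult_left_mono)
qed simp_all

lemma et_while_unfold:
  "et c (While \<psi> \<phi> C) f \<sigma> = of_bool (\<psi> \<sigma> \<and> \<phi> \<sigma>) * et c C (et c (While \<psi> \<phi> C) f) \<sigma>
      + of_bool (\<psi> \<sigma> \<and> \<not> \<phi> \<sigma>) * f \<sigma>"
proof -
  let ?\<Phi> = "\<lambda>F \<sigma>. of_bool (\<psi> \<sigma> \<and> \<phi> \<sigma>) * et c C F \<sigma> + of_bool (\<psi> \<sigma> \<and> \<not> \<phi> \<sigma>) * f \<sigma>"
  have "mono ?\<Phi>"
    by (rule monoI) (auto simp: le_fun_def intro!: add_mono mult_left_mono et_mono[unfolded le_fun_def, rule_format])
  then have "lfp ?\<Phi> = ?\<Phi> (lfp ?\<Phi>)" by (rule lfp_unfold)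
  then show ?thesis by (simp add: fun_eq_iff)
qed

lemma ec_comp_kappa: "ec c f \<circ> kappa D = ec c (et c D f)"
proof
  fix a show "(ec c f \<circ> kappa D) a = ec c (et c D f) a" by (cases a) simp_all
qed

lemma step_cost_nonneg: "step \<gamma> r \<mu> \<Longrightarrow> 0 \<le> r"
proof (induction rule: step.induct)
  case (step_tick r \<sigma>)
  show ?case using Rep_nnrat[of r] by (simp add: tickcost_def)
qed simp_all

lemma step_et_sound: "step \<gamma> r \<mu> \<Longrightarrow> of_bool c * ennreal r + Emd \<mu> (ec c f) \<le> ec c f \<gamma>"
proof (induction arbitrary: f rule: step.induct)
  case (step_assign x d \<sigma>)
  have "Emd (mfam {i. 0 < pmf (d \<sigma>) i} (\<lambda>i. pmf (d \<sigma>) i) (\<lambda>i. Term (\<sigma>(x := i)))) (ec c f)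
      \<le> (\<Sum>\<^sub>\<infinity>i\<in>{i. 0 < pmf (d \<sigma>) i}. ennreal (pmf (d \<sigma>) i) * ec c f (Term (\<sigma>(x := i))))"
    by (rule Emd_mfam_le)
  also have "\<dots> \<le> (\<Sum>\<^sub>\<infinity>i. ennreal (pmf (d \<sigma>) i) * f (\<sigma>(x := i)))"
    by (rule infsum_mono_neutral) auto
  finally show ?case by simp
next
  case (step_pchoice C p D \<sigma>)
  let ?q = "\<lambda>b. if b then prb p else 1 - prb p"
  have "Emd (mfam {b. 0 < ?q b} ?q (\<lambda>b. Active (if b then C else D) \<sigma>)) (ec c f)
      \<le> (\<Sum>\<^sub>\<infinity>b\<in>{b. 0 < ?q b}. ennreal (?q b) * ec c f (Active (if b then C else D) \<sigma>))"
    by (rule Emd_mfam_le)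
  also have "\<dots> \<le> (\<Sum>\<^sub>\<infinity>b. ennreal (?q b) * ec c f (Active (if b then C else D) \<sigma>))"
    by (rule infsum_mono_neutral) auto
  also have "\<dots> = ennreal (prb p) * et c C f \<sigma> + ennreal (1 - prb p) * et c D f \<sigma>"
    by (simp add: UNIV_bool add.commute)
  finally show ?case by simp
next
  case (step_while_t \<psi> \<sigma> \<phi> C)
  then show ?case using et_while_unfold[of c \<psi> \<phi> C f \<sigma>] by (simp add: Emd_dirac del: et.simps(6))
next
  case (step_while_f \<psi> \<sigma> \<phi> C)
  then show ?case using et_while_unfold[of c \<psi> \<phi> C f \<sigma>] by (simp add: Emd_dirac del: et.simps(6))
next
  case (step_seq C \<sigma> r \<mu> D)
  have "Emd (mmap (kappa D) \<mu>) (ec c f) \<le> Emd \<mu> (ec c (et c D f))"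
    using Emd_mmap_le[of "kappa D" \<mu> "ec c f"] by (simp add: ec_comp_kappa)
  then have "of_bool c * ennreal r + Emd (mmap (kappa D) \<mu>) (ec c f)
      \<le> of_bool c * ennreal r + Emd \<mu> (ec c (et c D f))"
    by (rule add_left_mono)
  also have "\<dots> \<le> ec c (et c D f) (Active C \<sigma>)"
    by (rule step_seq.IH)
  finally show ?case by simp
qed (simp_all add: Emd_dirac)

lemma lstep_cost_nonneg: "lstep \<mu> w \<nu> \<Longrightarrow> 0 \<le> w"
proof (induction rule: lstep.induct)
  case (lstep_step \<gamma> w \<mu>)
  then show ?case by (rule step_cost_nonneg)
next
  case (lstep_union I \<mu> ws \<nu> p w)
  show ?case
    using \<open>((\<lambda>i. p i * ws i) has_sum w) I\<close>
    by (rule has_sum_nonneg) (use lstep_union in \<open>simp add: less_imp_le\<close>)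
qed simp

lemma lstep_weights_in_unit: "lstep \<mu> w \<nu> \<Longrightarrow> weights_in_unit \<mu>"
proof (induction rule: lstep.induct)
  case (lstep_refl \<mu>)
  then show ?case by (simp add: is_mdist_def weights_in_unit_def)
next
  case (lstep_step \<gamma> w \<mu>)
  show ?case by (rule weights_in_unit_dirac)
next
  case (lstep_union I \<mu> ws \<nu> p w)
  then show ?case by (intro weights_in_unit_munion) auto
qed

lemma lstep_et_sound: "lstep \<mu> w \<nu> \<Longrightarrow> of_bool c * ennreal w + Emd \<nu> (ec c f) \<le> Emd \<mu> (ec c f)"
proof (induction rule: lstep.induct)
  case (lstep_step \<gamma> w \<mu>)
  then show ?case by (simp add: step_et_sound Emd_dirac)
next
  case (lstep_union I \<mu> ws \<nu> p w)
  let ?e = "of_bool c :: ennreal" and ?g = "ec c f"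
  have pos: "\<forall>i\<in>I. 0 < p i" and mass: "(\<Sum>\<^sub>\<infinity>i\<in>I. ennreal (p i)) \<le> 1"
    and cost: "((\<lambda>i. p i * ws i) has_sum w) I" by fact+
  have ws: "0 \<le> ws i" and IH: "?e * ennreal (ws i) + Emd (\<nu> i) ?g \<le> Emd (\<mu> i) ?g"
    and unit: "weights_in_unit (\<mu> i)" if "i \<in> I" for i
    using lstep_union.IH that lstep_cost_nonneg lstep_weights_in_unit by blast+
  have cost_sum: "?e * ennreal w = (\<Sum>\<^sub>\<infinity>i\<in>I. ?e * ennreal (p i * ws i))"
    using infsum_ennreal_of_has_sum[OF cost] pos ws
    by (simp add: infsum_cmult_right_ennreal less_imp_le)
  have "?e * ennreal w + Emd (munion I p \<nu>) ?g
      \<le> (\<Sum>\<^sub>\<infinity>i\<in>I. ?e * ennreal (p i * ws i)) + (\<Sum>\<^sub>\<infinity>i\<in>I. ennreal (p i) * Emd (\<nu> i) ?g)"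
    unfolding cost_sum by (rule add_left_mono[OF Emd_munion_le[OF pos]])
  also have "\<dots> = (\<Sum>\<^sub>\<infinity>i\<in>I. ennreal (p i) * (?e * ennreal (ws i) + Emd (\<nu> i) ?g))"
    using pos ws by (simp add: infsum_add[symmetric] ennreal_mult distrib_left mult_ac less_imp_le
        cong: infsum_cong)
  also have "\<dots> \<le> (\<Sum>\<^sub>\<infinity>i\<in>I. ennreal (p i) * Emd (\<mu> i) ?g)"
    using IH by (intro infsum_mono mult_left_mono) auto
  also have "\<dots> = Emd (munion I p \<mu>) ?g"
    using unit pos mass by (intro Emd_munion_eq[symmetric] pos finite_munion_contributors) auto
  finally show ?case .
qed simp

lemma mstep_cost_nonneg: "mstep \<mu> w \<nu> \<Longrightarrow> 0 \<le> w"
  by (induction rule: mstep.induct) (simp_all add: lstep_cost_nonneg)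

lemma mstep_et_sound: "mstep \<mu> w \<nu> \<Longrightarrow> of_bool c * ennreal w + Emd \<nu> (ec c f) \<le> Emd \<mu> (ec c f)"
proof (induction rule: mstep.induct)
  case (mstep_one \<mu> w \<nu>)
  then show ?case by (rule lstep_et_sound)
next
  case (mstep_trans \<mu> w1 \<mu>' w2 \<nu>)
  then have "of_bool c * ennreal (w1 + w2) + Emd \<nu> (ec c f)
      = of_bool c * ennreal w1 + (of_bool c * ennreal w2 + Emd \<nu> (ec c f))"
    by (simp add: mstep_cost_nonneg distrib_left add.assoc)
  also have "\<dots> \<le> of_bool c * ennreal w1 + Emd \<mu>' (ec c f)"
    using mstep_trans.IH(2) by (rule add_left_mono)
  also have "\<dots> \<le> Emd \<mu> (ec c f)"
    by (rule mstep_trans.IH(1))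
  finally show ?case .
qed simp

theorem mainTheorem5:
  fixes \<mu> \<nu> :: "('v::finite) conf mdist" and w :: real and f :: "'v expect" and c :: bool
  assumes "is_mdist \<mu>" and "is_mdist \<nu>" and "0 \<le> w"
    and "mstep \<mu> w \<nu>"
  shows "Emd \<mu> (ec c f) \<ge> of_bool c * ennreal w + Emd \<nu> (ec c f)"
  using assms(4) by (rule mstep_et_sound)

end
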